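(* (i) Let $p,m,n\in\mathbb{N}$ and let $\{R_j\}_{j\in J}$ be a system of representatives of the right cosets in $\Gamma_0(nm,p)\backslash\Gamma_0(n,p)$. Then for distinct $j_1,j_2\in J$, $\Gamma_0(nm)R_{j_1}\cap\Gamma_0(nm)R_{j_2}=\emptyset$. (ii) Let $p$ be a prime with $p\mid n$, $e\in\mathbb{N}$, and let $\{R_j\}_{j\in J}$ be a system of representatives of the right cosets in $\Gamma_0(p^en,p)\backslash\Gamma_0(n,p)$ (i.e. $\Gamma_0(n,p)=\bigsqcup_{j}\Gamma_0(p^en,p)R_j$). Then $\{R_j\}_{j\in J}$ is also a system of representatives of the right cosets in $\Gamma_0(p^en)\backslash\Gamma_0(n)$.
   Context: $\Gamma_0(n)=\{\begin{pmatrix}a&b\\c&d\end{pmatrix}\in SL(2,\mathbb{Z}):n\mid c\}$; $\Gamma_0(n,m)=\{\begin{pmatrix}a&b\\c&d\end{pmatrix}\in SL(2,\mathbb{Z}):n\mid c,\ m\mid b\}$. *)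

theory Defs
  imports "HOL-Analysis.Analysis"
begin

text \<open>2x2 integer matrices are rendered as int^2^2; for A = (a b; c d) we have
  A$1$1 = a, A$1$2 = b, A$2$1 = c, A$2$2 = d.\<close>

definition SL2Z :: "(int^2^2) set" where
  "SL2Z = {A. det A = 1}"

definition Gamma0 :: "nat \<Rightarrow> (int^2^2) set" where
  "Gamma0 n = {A \<in> SL2Z. int n dvd A$2$1}"

definition Gamma0' :: "nat \<Rightarrow> nat \<Rightarrow> (int^2^2) set" where
  "Gamma0' n m = {A \<in> SL2Z. int n dvd A$2$1 \<and> int m dvd A$1$2}"

definition rcos :: "(int^2^2) set \<Rightarrow> int^2^2 \<Rightarrow> (int^2^2) set" where
  "rcos H g = (\<lambda>h. h ** g) ` H"

definition right_coset_reps :: "(int^2^2) set \<Rightarrow> (int^2^2) set \<Rightarrow> 'j set \<Rightarrow> ('j \<Rightarrow> int^2^2) \<Rightarrow> bool" where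
  "right_coset_reps H G J R \<longleftrightarrow>
     (\<forall>j\<in>J. R j \<in> G) \<and> (\<forall>g\<in>G. \<exists>!j. j \<in> J \<and> g \<in> rcos H (R j))"

end

theory Submission
  imports Defs
begin

text \<open>Both groups \<open>\<Gamma>\<^sub>0(N, p)\<close> in the statement are intersections \<open>K \<inter> G\<close> with
  \<open>K = \<Gamma>\<^sub>0(N)\<close> and \<open>G = \<Gamma>\<^sub>0(n, p)\<close>. For subgroups \<open>K\<close>, \<open>G\<close> of any group, the right cosets of
  \<open>K \<inter> G\<close> in \<open>G\<close> inject into those of \<open>K\<close>, which gives (i); they exhaust the cosets of \<open>K\<close>
  in any group \<open>G'\<close> with \<open>G' = K G\<close>. For (ii) it remains to factor every \<open>g \<in> \<Gamma>\<^sub>0(n)\<close> with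
  \<open>g = (a b; c d)\<close> as \<open>g = k (1 0; -s 1)\<close> with \<open>k \<in> \<Gamma>\<^sub>0(p\<^sup>e n)\<close> and \<open>n | s\<close>, i.e. to solve
  \<open>c + d s \<equiv> 0 (mod p\<^sup>e n)\<close>; this is possible because \<open>d\<close> is prime to \<open>n\<close>, hence to \<open>p\<close>.\<close>

definition mat2 :: "int \<Rightarrow> int \<Rightarrow> int \<Rightarrow> int \<Rightarrow> int^2^2" where
  "mat2 a b c d = (\<chi> i j. if i = 1 then (if j = 1 then a else b) else (if j = 1 then c else d))"

lemma mat2_nth [simp]:
  "mat2 a b c d $1$1 = a" "mat2 a b c d $1$2 = b" "mat2 a b c d $2$1 = c" "mat2 a b c d $2$2 = d"
  by (simp_all add: mat2_def)

lemma mat2_eq_iff: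
  "(A::int^2^2) = B \<longleftrightarrow> A$1$1 = B$1$1 \<and> A$1$2 = B$1$2 \<and> A$2$1 = B$2$1 \<and> A$2$2 = B$2$2"
  by (auto simp: vec_eq_iff forall_2)

lemma matrix_mult_nth_2 [simp]: "((A::int^2^2) ** B)$i$j = A$i$1 * B$1$j + A$i$2 * B$2$j"
  by (simp add: matrix_matrix_mult_def sum_2)

lemma mat_1_nth_2 [simp]:
  "(mat 1 :: int^2^2)$1$1 = 1" "(mat 1 :: int^2^2)$1$2 = 0"
  "(mat 1 :: int^2^2)$2$1 = 0" "(mat 1 :: int^2^2)$2$2 = 1"
  by (simp_all add: mat_def)

definition adj2 :: "int^2^2 \<Rightarrow> int^2^2" where
  "adj2 A = mat2 (A$2$2) (- A$1$2) (- A$2$1) (A$1$1)"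

lemma adj2_mult_cancel: "det A = 1 \<Longrightarrow> adj2 A ** A = mat 1"
  unfolding mat2_eq_iff adj2_def by (simp add: det_2 algebra_simps)

lemma mult_adj2_cancel: "det A = 1 \<Longrightarrow> A ** adj2 A = mat 1"
  unfolding mat2_eq_iff adj2_def by (simp add: det_2 algebra_simps)

lemma det_adj2 [simp]: "det (adj2 A) = det A"
  unfolding adj2_def by (simp add: det_2 algebra_simps)

definition sl2_subgroup :: "(int^2^2) set \<Rightarrow> bool" where
  "sl2_subgroup H \<longleftrightarrow> H \<subseteq> SL2Z \<and> mat 1 \<in> H \<and>
     (\<forall>A\<in>H. \<forall>B\<in>H. A ** B \<in> H) \<and> (\<forall>A\<in>H. adj2 A \<in> H)"

lemma sl2_subgroupD:
  assumes "sl2_subgroup H"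
  shows "A \<in> H \<Longrightarrow> det A = 1" "mat 1 \<in> H"
    and "A \<in> H \<Longrightarrow> B \<in> H \<Longrightarrow> A ** B \<in> H" "A \<in> H \<Longrightarrow> adj2 A \<in> H"
  using assms unfolding sl2_subgroup_def SL2Z_def by auto

lemma sl2_subgroup_Int: "sl2_subgroup K \<Longrightarrow> sl2_subgroup G \<Longrightarrow> sl2_subgroup (K \<inter> G)"
  unfolding sl2_subgroup_def by auto

lemma mem_rcos_iff:
  assumes "B \<in> SL2Z"
  shows "A \<in> rcos K B \<longleftrightarrow> A ** adj2 B \<in> K"
proof -
  have B: "det B = 1" using assms unfolding SL2Z_def by simp
  have "A = k ** B \<longleftrightarrow> A ** adj2 B = k" for k
  proof
    assume "A = k ** B"
    then show "A ** adj2 B = k" using B by (simp add: matrix_mul_assoc[symmetric] mult_adj2_cancel)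
  next
    assume "A ** adj2 B = k"
    then show "A = k ** B" using B by (auto simp: matrix_mul_assoc[symmetric] adj2_mult_cancel)
  qed
  then show ?thesis unfolding rcos_def image_iff by auto
qed

lemma rcos_overlap_imp_quotient:
  assumes K: "sl2_subgroup K" and X: "X \<in> rcos K A" "X \<in> rcos K B" and "B \<in> SL2Z"
  shows "A ** adj2 B \<in> K"
proof -
  obtain k where k: "k \<in> K" "X = k ** A" using X(1) unfolding rcos_def by auto
  have "adj2 k ** k = mat 1" using adj2_mult_cancel sl2_subgroupD(1)[OF K k(1)] .
  then have "A ** adj2 B = adj2 k ** (X ** adj2 B)" using k(2) by (simp add: matrix_mul_assoc)
  moreover have "X ** adj2 B \<in> K" using X(2) mem_rcos_iff \<open>B \<in> SL2Z\<close> by blast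
  ultimately show ?thesis using K k(1) by (simp add: sl2_subgroupD)
qed

lemma right_coset_reps_Int_rcos_disjoint:
  assumes reps: "right_coset_reps (K \<inter> G) G J R"
    and K: "sl2_subgroup K" and G: "sl2_subgroup G"
    and j: "j1 \<in> J" "j2 \<in> J" "j1 \<noteq> j2"
  shows "rcos K (R j1) \<inter> rcos K (R j2) = {}"
proof (rule ccontr)
  assume "rcos K (R j1) \<inter> rcos K (R j2) \<noteq> {}"
  then obtain X where X: "X \<in> rcos K (R j1)" "X \<in> rcos K (R j2)" by blast
  have R: "R j1 \<in> G" "R j2 \<in> G" using reps j unfolding right_coset_reps_def by auto
  then have SL: "R j1 \<in> SL2Z" "R j2 \<in> SL2Z" using G unfolding sl2_subgroup_def by auto
  have "R j1 ** adj2 (R j2) \<in> K" using rcos_overlap_imp_quotient[OF K X SL(2)] .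
  moreover have "R j1 ** adj2 (R j2) \<in> G" using G R by (simp add: sl2_subgroupD)
  ultimately have "R j1 \<in> rcos (K \<inter> G) (R j2)"
    using mem_rcos_iff[OF SL(2)] by blast
  moreover have "R j1 \<in> rcos (K \<inter> G) (R j1)"
    using sl2_subgroupD(2)[OF sl2_subgroup_Int[OF K G]] unfolding rcos_def
    by (metis image_eqI matrix_mul_lid)
  moreover have "\<exists>!j. j \<in> J \<and> R j1 \<in> rcos (K \<inter> G) (R j)"
    using reps R unfolding right_coset_reps_def by blast
  ultimately show False using j by blast
qed

lemma right_coset_reps_Int_extend:
  assumes reps: "right_coset_reps (K \<inter> G) G J R"
    and K: "sl2_subgroup K" and G: "sl2_subgroup G"
    and "G \<subseteq> G'" and factor: "\<And>g. g \<in> G' \<Longrightarrow> \<exists>k\<in>K. \<exists>l\<in>G. g = k ** l"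
  shows "right_coset_reps K G' J R"
  unfolding right_coset_reps_def
proof (intro conjI ballI)
  show "R j \<in> G'" if "j \<in> J" for j
    using reps that \<open>G \<subseteq> G'\<close> unfolding right_coset_reps_def by blast
  fix g assume "g \<in> G'"
  then obtain k l where kl: "k \<in> K" "l \<in> G" "g = k ** l" using factor by blast
  then obtain j h where jh: "j \<in> J" "h \<in> K \<inter> G" "l = h ** R j"
    using reps unfolding right_coset_reps_def rcos_def by blast
  have "g = (k ** h) ** R j" using kl(3) jh(3) by (simp add: matrix_mul_assoc)
  moreover have "k ** h \<in> K" using K kl(1) jh(2) by (simp add: sl2_subgroupD)
  ultimately have "g \<in> rcos K (R j)" unfolding rcos_def by blast
  then show "\<exists>!j. j \<in> J \<and> g \<in> rcos K (R j)"
    using right_coset_reps_Int_rcos_disjoint[OF reps K G] jh(1) by blast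
qed

lemma sl2_subgroup_Gamma0: "sl2_subgroup (Gamma0 N)"
  unfolding sl2_subgroup_def Gamma0_def SL2Z_def by (auto simp: det_mul) (simp add: adj2_def)

lemma sl2_subgroup_Gamma0': "sl2_subgroup (Gamma0' N M)"
  unfolding sl2_subgroup_def Gamma0'_def SL2Z_def by (auto simp: det_mul) (simp_all add: adj2_def)

lemma Gamma0_Int_Gamma0': "n dvd N \<Longrightarrow> Gamma0 N \<inter> Gamma0' n M = Gamma0' N M"
  unfolding Gamma0_def Gamma0'_def by (auto intro: dvd_trans)

lemma Gamma0'_subset_Gamma0: "Gamma0' N M \<subseteq> Gamma0 N"
  unfolding Gamma0_def Gamma0'_def by auto

lemma Gamma0_coprime_lower_right:
  assumes "g \<in> Gamma0 n"
  shows "coprime (g$2$2) (int n)"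
proof (rule coprimeI)
  fix x assume "x dvd g$2$2" "x dvd int n"
  moreover have "int n dvd g$2$1" using assms unfolding Gamma0_def by simp
  ultimately have "x dvd g$1$1 * g$2$2 - g$1$2 * g$2$1" by (meson dvd_diff dvd_mult dvd_trans)
  also have "g$1$1 * g$2$2 - g$1$2 * g$2$1 = 1"
    using assms unfolding Gamma0_def SL2Z_def by (simp add: det_2)
  finally show "is_unit x" .
qed

lemma exists_shift_dvd:
  fixes c d q n :: int
  assumes "coprime d q" "n dvd c"
  shows "\<exists>s. n dvd s \<and> q * n dvd c + d * s"
proof -
  obtain c' where c: "c = n * c'" using assms(2) by blast
  obtain u v where uv: "u * d + v * q = 1" using bezout_int[of d q] assms(1) by auto
  have "c + d * (n * (- c' * u)) = n * c' * (1 - u * d)"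
    unfolding c by (simp add: algebra_simps)
  also have "\<dots> = q * n * (c' * v)"
    using uv by (simp add: algebra_simps flip: uv)
  finally have "c + d * (n * (- c' * u)) = q * n * (c' * v)" .
  then show ?thesis by (metis dvd_triv_left)
qed

lemma Gamma0_factorization:
  assumes g: "g \<in> Gamma0 n" and "coprime (g$2$2) (int q)"
  shows "\<exists>k\<in>Gamma0 (q * n). \<exists>l\<in>Gamma0' n M. g = k ** l"
proof -
  have "int n dvd g$2$1" using g unfolding Gamma0_def by simp
  from exists_shift_dvd[OF assms(2) this]
  obtain s where s: "int n dvd s" "int (q * n) dvd g$2$1 + g$2$2 * s"
    unfolding of_nat_mult by blast
  define l where "l = mat2 1 0 (- s) 1"
  define k where "k = g ** mat2 1 0 s 1"
  have "l \<in> Gamma0' n M" unfolding l_def Gamma0'_def SL2Z_def using s(1) by (simp add: det_2)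
  moreover have "k \<in> Gamma0 (q * n)"
  proof -
    have "det (mat2 1 0 s 1) = 1" by (simp add: det_2)
    then have "det k = 1" using g unfolding k_def Gamma0_def SL2Z_def by (simp add: det_mul)
    moreover have "k$2$1 = g$2$1 + g$2$2 * s" unfolding k_def by simp
    ultimately show ?thesis using s(2) unfolding Gamma0_def SL2Z_def by simp
  qed
  moreover have "g = k ** l"
    unfolding k_def l_def matrix_mul_assoc[symmetric] by (simp add: mat2_eq_iff)
  ultimately show ?thesis by blast
qed

theorem mainTheorem9:
  shows "(\<forall>(p::nat) (m::nat) (n::nat) (J::'j set) (R::'j \<Rightarrow> int^2^2).
            right_coset_reps (Gamma0' (n*m) p) (Gamma0' n p) J R \<longrightarrow>
            (\<forall>j1\<in>J. \<forall>j2\<in>J. j1 \<noteq> j2 \<longrightarrow>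
               rcos (Gamma0 (n*m)) (R j1) \<inter> rcos (Gamma0 (n*m)) (R j2) = {}))
       \<and> (\<forall>(p::nat) (n::nat) (e::nat) (J::'k set) (R::'k \<Rightarrow> int^2^2).
            prime p \<and> p dvd n \<and> right_coset_reps (Gamma0' (p^e*n) p) (Gamma0' n p) J R \<longrightarrow>
            right_coset_reps (Gamma0 (p^e*n)) (Gamma0 n) J R)"
proof (intro conjI allI impI ballI)
  fix p m n :: nat and J :: "'j set" and R j1 j2
  assume "right_coset_reps (Gamma0' (n*m) p) (Gamma0' n p) J R"
    and j: "j1 \<in> J" "j2 \<in> J" "j1 \<noteq> j2"
  then have "right_coset_reps (Gamma0 (n*m) \<inter> Gamma0' n p) (Gamma0' n p) J R"
    by (simp add: Gamma0_Int_Gamma0')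
  from right_coset_reps_Int_rcos_disjoint[OF this sl2_subgroup_Gamma0 sl2_subgroup_Gamma0' j]
  show "rcos (Gamma0 (n*m)) (R j1) \<inter> rcos (Gamma0 (n*m)) (R j2) = {}" .
next
  fix p n e :: nat and J :: "'k set" and R
  assume "prime p \<and> p dvd n \<and> right_coset_reps (Gamma0' (p^e*n) p) (Gamma0' n p) J R"
  then have "p dvd n"
    and reps: "right_coset_reps (Gamma0 (p^e*n) \<inter> Gamma0' n p) (Gamma0' n p) J R"
    by (simp_all add: Gamma0_Int_Gamma0')
  show "right_coset_reps (Gamma0 (p^e*n)) (Gamma0 n) J R"
  proof (rule right_coset_reps_Int_extend[OF reps sl2_subgroup_Gamma0 sl2_subgroup_Gamma0'])
    show "Gamma0' n p \<subseteq> Gamma0 n" by (rule Gamma0'_subset_Gamma0)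
    fix g assume g: "g \<in> Gamma0 n"
    have "coprime (g$2$2) (int p)"
      using coprime_divisors[OF dvd_refl _ Gamma0_coprime_lower_right[OF g]] \<open>p dvd n\<close> by simp
    then have "coprime (g$2$2) (int (p^e))" by simp
    with g show "\<exists>k\<in>Gamma0 (p^e*n). \<exists>l\<in>Gamma0' n p. g = k ** l"
      by (rule Gamma0_factorization)
  qed
qed

end
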